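(* Let $X$ be a finite set and let $K\colon X\times X\to\mathbb{R}$ satisfy $K(y,x)=K(x,y)\geq 0$ and $K(x,x)=0$ for all $x,y\in X$. If $K$ is conditionally strictly negative definite, then there exist a strictly positive definite kernel $A\colon X\times X\to\mathbb{R}$ and a constant $c>0$ such that $K(x,y)=-A(x,y)+c$ for all $x,y\in X$.
   Context: A kernel $K$ on a set $X$ is conditionally strictly negative definite if for every finitely supported $\lambda\colon X\to\mathbb{C}$ with $\lambda\neq 0$ and $\sum_{x\in X}\lambda(x)=0$ one has $\sum_{x,y\in X}\lambda(x)\overline{\lambda(y)}K(x,y)<0$. A hermitian kernel $A$ ($A(x,y)=\overline{A(y,x)}$) is strictly positive definite if for every finitely supported $\lambda\colon X\to\mathbb{C}$ with $\lambda\neq0$ one has $\sum_{x,y\in X}\lambda(x)\overline{\lambda(y)}A(x,y)>0$. *)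

theory Defs
  imports "HOL-Analysis.Analysis" "HOL-Library.Complex_Order"
begin

text \<open>Kernels on a finite set X are modelled as functions on a type 'a restricted to X. The inequalities are in the complex partial order
  of HOL-Library.Complex_Order (z < 0 iff z is real and negative).\<close>

definition cond_strictly_neg_def_on :: "'a set \<Rightarrow> ('a \<Rightarrow> 'a \<Rightarrow> real) \<Rightarrow> bool" where
  "cond_strictly_neg_def_on X K \<longleftrightarrow>
     (\<forall>l::'a \<Rightarrow> complex. (\<forall>x. x \<notin> X \<longrightarrow> l x = 0) \<and> (\<exists>x\<in>X. l x \<noteq> 0)
        \<and> (\<Sum>x\<in>X. l x) = 0 \<longrightarrow>
        (\<Sum>x\<in>X. \<Sum>y\<in>X. l x * cnj (l y) * complex_of_real (K x y)) < 0)"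

definition strictly_pos_def_on :: "'a set \<Rightarrow> ('a \<Rightarrow> 'a \<Rightarrow> real) \<Rightarrow> bool" where
  "strictly_pos_def_on X A \<longleftrightarrow>
     (\<forall>x\<in>X. \<forall>y\<in>X. A x y = A y x) \<and>
     (\<forall>l::'a \<Rightarrow> complex. (\<forall>x. x \<notin> X \<longrightarrow> l x = 0) \<and> (\<exists>x\<in>X. l x \<noteq> 0) \<longrightarrow>
        (\<Sum>x\<in>X. \<Sum>y\<in>X. l x * cnj (l y) * complex_of_real (A x y)) > 0)"

end

theory Submission
  imports Defs
begin

text \<open>On the compact unit sphere of coefficient vectors the quadratic form \<open>Q\<^sub>K\<close> of \<open>K\<close> is
  negative wherever \<open>|\<Sum>\<lambda>|\<^sup>2\<close> vanishes, so compactness yields \<open>c > 0\<close> with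
  \<open>Q\<^sub>K(\<lambda>) < c |\<Sum>\<lambda>|\<^sup>2\<close> on the sphere, and by homogeneity for every nonzero \<open>\<lambda>\<close>.
  The quadratic form of \<open>A = c - K\<close> is \<open>c |\<Sum>\<lambda>|\<^sup>2 - Q\<^sub>K(\<lambda>)\<close>, hence positive.\<close>

lemma compact_less_multiple:
  fixes f g :: "'a::topological_space \<Rightarrow> real"
  assumes "compact S" and "continuous_on S f" and "continuous_on S g"
    and g_nonneg: "\<And>x. x \<in> S \<Longrightarrow> g x \<ge> 0"
    and neg_on_zeros: "\<And>x. x \<in> S \<Longrightarrow> g x = 0 \<Longrightarrow> f x < 0"
  shows "\<exists>c>0. \<forall>x\<in>S. f x < c * g x"
proof -
  have "\<exists>U. open U \<and> U \<inter> S = {x\<in>S. f x < real n * g x}" for n :: nat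
  proof -
    have "continuous_on S (\<lambda>x. real n * g x - f x)"
      using assms(2,3) by (intro continuous_intros)
    then obtain U where "open U" "U \<inter> S = (\<lambda>x. real n * g x - f x) -` {0<..} \<inter> S"
      by (meson continuous_on_open_invariant open_greaterThan)
    moreover have "(\<lambda>x. real n * g x - f x) -` {0<..} \<inter> S = {x\<in>S. f x < real n * g x}"
      by auto
    ultimately show ?thesis by (intro exI[of _ U]) simp
  qed
  then obtain U where U: "\<And>n. open (U n)" "\<And>n. U n \<inter> S = {x\<in>S. f x < real n * g x}"
    by (metis choice_iff)
  have cover: "S \<subseteq> (\<Union>n. U n)"
  proof
    fix x assume x: "x \<in> S"
    obtain n :: nat where "f x < real n * g x"
    proof (cases "g x = 0")
      case True
      then show ?thesis using that[of 0] neg_on_zeros x by simp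
    next
      case False
      then have "g x > 0" using g_nonneg x by fastforce
      obtain n :: nat where "f x / g x < real n" using reals_Archimedean2 by blast
      then show ?thesis using that[of n] \<open>g x > 0\<close> by (simp add: divide_less_eq)
    qed
    then have "x \<in> U n" using U(2)[of n] x by blast
    then show "x \<in> (\<Union>n. U n)" by blast
  qed
  obtain N where N: "finite N" "S \<subseteq> (\<Union>n\<in>N. U n)"
    by (rule compactE_image[OF \<open>compact S\<close> U(1) cover])
  have "f x < real (Max (insert 0 N) + 1) * g x" if "x \<in> S" for x
  proof -
    obtain n where "n \<in> N" "x \<in> U n" using N(2) \<open>x \<in> S\<close> by blast
    moreover have "f x < real n * g x" using U(2)[of n] \<open>x \<in> S\<close> \<open>x \<in> U n\<close> by blast
    moreover have "real n \<le> real (Max (insert 0 N) + 1)"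
      using N(1) \<open>n \<in> N\<close> by (intro of_nat_mono trans_le_add1 Max_ge) auto
    ultimately show ?thesis
      using mult_right_mono[OF _ g_nonneg[OF \<open>x \<in> S\<close>]] order_less_le_trans by blast
  qed
  then show ?thesis by (intro exI[of _ "real (Max (insert 0 N) + 1)"]) auto
qed

definition quad_form :: "'a set \<Rightarrow> ('a \<Rightarrow> 'a \<Rightarrow> real) \<Rightarrow> ('a \<Rightarrow> complex) \<Rightarrow> complex" where
  "quad_form X K l = (\<Sum>x\<in>X. \<Sum>y\<in>X. l x * cnj (l y) * complex_of_real (K x y))"

lemma Im_quad_form_eq_0:
  assumes "\<forall>x\<in>X. \<forall>y\<in>X. K y x = K x y"
  shows "Im (quad_form X K l) = 0"
proof -
  have "cnj (quad_form X K l) = (\<Sum>x\<in>X. \<Sum>y\<in>X. cnj (l x) * l y * complex_of_real (K x y))"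
    by (simp add: quad_form_def)
  also have "\<dots> = (\<Sum>y\<in>X. \<Sum>x\<in>X. cnj (l x) * l y * complex_of_real (K x y))"
    by (rule sum.swap)
  also have "\<dots> = quad_form X K l"
    unfolding quad_form_def using assms by (intro sum.cong refl) (auto simp: mult_ac)
  finally show ?thesis
    by (metis Reals_cnj_iff complex_is_Real_iff)
qed

lemma quad_form_scale: "quad_form X K (\<lambda>x. a * l x) = a * cnj a * quad_form X K l"
  unfolding quad_form_def by (simp add: sum_distrib_left mult_ac)

lemma quad_form_const_diff:
  "quad_form X (\<lambda>x y. c - K x y) l
     = complex_of_real (c * (cmod (\<Sum>x\<in>X. l x))\<^sup>2) - quad_form X K l"
proof -
  have "complex_of_real ((cmod (\<Sum>x\<in>X. l x))\<^sup>2) = (\<Sum>x\<in>X. l x) * cnj (\<Sum>x\<in>X. l x)"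
    by (rule complex_norm_square)
  also have "\<dots> = (\<Sum>x\<in>X. \<Sum>y\<in>X. l x * cnj (l y))"
    by (simp add: sum_product cnj_sum)
  finally show ?thesis
    unfolding quad_form_def by (simp add: sum_distrib_left algebra_simps sum_subtractf)
qed

definition unit_sphere_on :: "'a set \<Rightarrow> ('a \<Rightarrow> complex) set" where
  "unit_sphere_on X = {l. (\<forall>x. x \<notin> X \<longrightarrow> l x = 0) \<and> (\<Sum>x\<in>X. (cmod (l x))\<^sup>2) = 1}"

lemma compact_unit_sphere_on:
  assumes "finite X"
  shows "compact (unit_sphere_on X)"
proof -
  let ?B = "\<lambda>x::'a. if x \<in> X then cball (0::complex) 1 else {0}"
  have "compactin (product_topology (\<lambda>i. euclidean) UNIV) (PiE UNIV ?B)"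
    by (subst compactin_PiE) auto
  then have "compact (Pi UNIV ?B)"
    by (simp add: euclidean_product_topology PiE_UNIV_domain)
  moreover have "closed {l::'a \<Rightarrow> complex. (\<Sum>x\<in>X. (cmod (l x))\<^sup>2) = 1}"
    by (intro closed_Collect_eq continuous_intros continuous_on_product_then_coordinatewise)
  moreover have "unit_sphere_on X = Pi UNIV ?B \<inter> {l. (\<Sum>x\<in>X. (cmod (l x))\<^sup>2) = 1}"
  proof -
    have "cmod (l x) \<le> 1" if "(\<Sum>x\<in>X. (cmod (l x))\<^sup>2) = 1" "x \<in> X" for l :: "'a \<Rightarrow> complex" and x
    proof -
      have "(cmod (l x))\<^sup>2 \<le> (\<Sum>x\<in>X. (cmod (l x))\<^sup>2)"
        using assms that(2) by (intro member_le_sum) auto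
      then show ?thesis using that(1) by (simp add: power_le_one_iff)
    qed
    then show ?thesis by (auto simp: unit_sphere_on_def Pi_iff split: if_splits)
  qed
  ultimately show ?thesis by (simp add: compact_Int_closed)
qed

lemma rescale_to_unit_sphere_on:
  assumes "finite X" and "\<forall>x. x \<notin> X \<longrightarrow> l x = 0" and "\<exists>x\<in>X. l x \<noteq> 0"
  obtains r t where "r > 0" "t \<in> unit_sphere_on X" "l = (\<lambda>x. complex_of_real r * t x)"
proof -
  define r where "r = sqrt (\<Sum>x\<in>X. (cmod (l x))\<^sup>2)"
  obtain x0 where "x0 \<in> X" "l x0 \<noteq> 0" using assms(3) by blast
  then have pos: "(\<Sum>x\<in>X. (cmod (l x))\<^sup>2) > 0"
    by (intro sum_pos2[OF assms(1) \<open>x0 \<in> X\<close>]) auto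
  then have "r > 0" and r2: "r\<^sup>2 = (\<Sum>x\<in>X. (cmod (l x))\<^sup>2)"
    by (simp_all add: r_def)
  define t where "t x = l x / complex_of_real r" for x
  have "(\<Sum>x\<in>X. (cmod (t x))\<^sup>2) = (\<Sum>x\<in>X. (cmod (l x))\<^sup>2) / r\<^sup>2"
    by (simp add: t_def norm_divide power_divide sum_divide_distrib)
  then have "t \<in> unit_sphere_on X"
    using assms(2) pos r2 by (simp add: unit_sphere_on_def t_def)
  moreover have "l = (\<lambda>x. complex_of_real r * t x)"
    using \<open>r > 0\<close> by (auto simp: t_def)
  ultimately show ?thesis using \<open>r > 0\<close> that by blast
qed

lemma cond_strictly_neg_def_on_bounded_by_sum:
  assumes "finite X" and "cond_strictly_neg_def_on X K"
  shows "\<exists>c>0. \<forall>l. (\<forall>x. x \<notin> X \<longrightarrow> l x = 0) \<and> (\<exists>x\<in>X. l x \<noteq> 0) \<longrightarrow>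
           Re (quad_form X K l) < c * (cmod (\<Sum>x\<in>X. l x))\<^sup>2"
proof -
  have "\<exists>c>0. \<forall>t\<in>unit_sphere_on X. Re (quad_form X K t) < c * (cmod (\<Sum>x\<in>X. t x))\<^sup>2"
  proof (rule compact_less_multiple[OF compact_unit_sphere_on[OF assms(1)]])
    show "continuous_on (unit_sphere_on X) (\<lambda>t. Re (quad_form X K t))"
      unfolding quad_form_def
      by (intro continuous_intros continuous_on_product_then_coordinatewise continuous_on_id)
    show "continuous_on (unit_sphere_on X) (\<lambda>t. (cmod (\<Sum>x\<in>X. t x))\<^sup>2)"
      by (intro continuous_intros continuous_on_product_then_coordinatewise continuous_on_id)
  next
    fix t assume t: "t \<in> unit_sphere_on X" and "(cmod (\<Sum>x\<in>X. t x))\<^sup>2 = 0"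
    then have "(\<Sum>x\<in>X. t x) = 0" by simp
    moreover have "\<exists>x\<in>X. t x \<noteq> 0"
    proof (rule ccontr)
      assume "\<not> (\<exists>x\<in>X. t x \<noteq> 0)"
      then have "(\<Sum>x\<in>X. (cmod (t x))\<^sup>2) = 0" by simp
      with t show False by (simp add: unit_sphere_on_def)
    qed
    ultimately have "quad_form X K t < 0"
      using assms(2) t unfolding cond_strictly_neg_def_on_def quad_form_def unit_sphere_on_def by blast
    then show "Re (quad_form X K t) < 0" by (simp add: less_complex_def)
  qed simp
  then obtain c where "c > 0"
    and c: "\<forall>t\<in>unit_sphere_on X. Re (quad_form X K t) < c * (cmod (\<Sum>x\<in>X. t x))\<^sup>2"
    by blast
  have "Re (quad_form X K l) < c * (cmod (\<Sum>x\<in>X. l x))\<^sup>2"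
    if supp: "\<forall>x. x \<notin> X \<longrightarrow> l x = 0" "\<exists>x\<in>X. l x \<noteq> 0" for l
  proof -
    obtain r t where "r > 0" "t \<in> unit_sphere_on X" and l: "l = (\<lambda>x. complex_of_real r * t x)"
      using rescale_to_unit_sphere_on[OF assms(1) supp] .
    have "Re (quad_form X K l) = r\<^sup>2 * Re (quad_form X K t)"
      by (simp add: l quad_form_scale power2_eq_square)
    also have "\<dots> < r\<^sup>2 * (c * (cmod (\<Sum>x\<in>X. t x))\<^sup>2)"
      using c \<open>t \<in> unit_sphere_on X\<close> \<open>r > 0\<close> by simp
    also have "\<dots> = c * (cmod (\<Sum>x\<in>X. l x))\<^sup>2"
      using \<open>r > 0\<close> by (simp add: l sum_distrib_left[symmetric] norm_mult power_mult_distrib)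
    finally show ?thesis .
  qed
  then show ?thesis using \<open>c > 0\<close> by blast
qed

theorem theorem1:
  fixes X :: "'a set" and K :: "'a \<Rightarrow> 'a \<Rightarrow> real"
  assumes "finite X"
    and "\<forall>x\<in>X. \<forall>y\<in>X. K y x = K x y \<and> K x y \<ge> 0"
    and "\<forall>x\<in>X. K x x = 0"
    and "cond_strictly_neg_def_on X K"
  shows "\<exists>(A :: 'a \<Rightarrow> 'a \<Rightarrow> real) (c :: real). strictly_pos_def_on X A \<and> c > 0 \<and>
           (\<forall>x\<in>X. \<forall>y\<in>X. K x y = - A x y + c)"
proof -
  have sym: "\<forall>x\<in>X. \<forall>y\<in>X. K y x = K x y" using assms(2) by blast
  obtain c where "c > 0" and c: "\<forall>l. (\<forall>x. x \<notin> X \<longrightarrow> l x = 0) \<and> (\<exists>x\<in>X. l x \<noteq> 0) \<longrightarrow>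
      Re (quad_form X K l) < c * (cmod (\<Sum>x\<in>X. l x))\<^sup>2"
    using cond_strictly_neg_def_on_bounded_by_sum[OF assms(1,4)] by blast
  have "quad_form X (\<lambda>x y. c - K x y) l > 0"
    if "\<forall>x. x \<notin> X \<longrightarrow> l x = 0" "\<exists>x\<in>X. l x \<noteq> 0" for l
    using c that Im_quad_form_eq_0[OF sym, of l]
    by (simp add: quad_form_const_diff less_complex_def)
  then have "strictly_pos_def_on X (\<lambda>x y. c - K x y)"
    using sym by (auto simp: strictly_pos_def_on_def quad_form_def)
  then show ?thesis using \<open>c > 0\<close> by force
qed

end
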